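(* Let $P$ be a program and $M$ a mode for $P$. If (i) $P$ is linear, (ii) $P$ is safe w.r.t. $M$, (iii) $P$ satisfies $M$, and (iv) the non-unit clauses of $P$ are pairwise mutually exclusive w.r.t. $M$, then $P$ is semideterministic w.r.t. $M$.
   Context: Syntax. Predicate symbols $\mathit{true}$, $=$, $\neq$ are basic, all others non-basic; the set of function symbols is infinite. Basic atoms: $\mathit{true}$, $t_1=t_2$, $t_1\neq t_2$ (disequation); non-basic atoms: $p(t_1,\dots,t_m)$ with $p$ non-basic. A goal is a conjunction of atoms ("," associative, neutral element $\mathit{true}$); a goal containing only basic atoms is basic. A clause $C$ is $A\leftarrow G$ with non-basic head $hd(C)$ and body $bd(C)$; it is a unit clause iff its body is a basic goal. A program is a set of clauses; it is linear iff every clause has at most one non-basic atom in its body. All mgu's are relevant and idempotent. A variable $X$ is a local variable of goal $G$ in clause $H\leftarrow G_1,G,G_2$ iff $X\in vars(G)-vars(H,G_1,G_2)$. Operational semantics (program $P$): (1) $(t_1=t_2,G)\longmapsto_P G\vartheta$ if $t_1,t_2$ unify with mgu $\vartheta$; (2) $(t_1\neq t_2,G)\longmapsto_P G$ if $t_1,t_2$ are not unifiable; (3) $(A,G)\longmapsto_P(bd(C),G)\vartheta$ if $A$ is non-basic, $C$ is a renamed apart clause of $P$ and $\vartheta$ an mgu of $A$ and $hd(C)$ — a step "using $C$". $\longmapsto^*_P$ is the reflexive-transitive closure. For $C\in P$ and a goal $(A_0,G_0)$ with $A_0$ non-basic, $(A_0,G_0)\Rightarrow_C(A_n,G_n)$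 iff there is a derivation $(A_0,G_0)\longmapsto_P\cdots\longmapsto_P(A_n,G_n)$ with $n>0$, whose first step uses $C$, with $A_i$ basic for $i=1,\dots,n-1$, and either $A_n$ non-basic or $(A_n,G_n)$ equal to $\mathit{true}$. $G_0\Rightarrow^*_P G_n$ iff $G_0\Rightarrow_{C_1}\cdots\Rightarrow_{C_n}G_n$ for some clauses $C_1,\dots,C_n$ of $P$ ($n\ge0$). Semideterminism. $P$ is semideterministic for a non-basic atom $A$ iff for each goal $G$ with $A\Rightarrow^*_P G$ there is at most one clause $C$ such that $G\Rightarrow_C G'$ for some goal $G'$ different from $\mathit{true}$. $P$ is semideterministic w.r.t. $M$ iff it is semideterministic for every non-basic atom satisfying $M$. Modes. A mode for non-basic $p$ of arity $h$ is $p(m_1,\dots,m_h)$, $m_i\in\{+,?\}$; $t_i$ is an input argument iff $m_i=+$; variables in input arguments are input variables. A mode for a program contains exactly one mode per non-basic predicate occurring in it. An atom satisfies $M$ iff $M$ has a mode for its predicate and its input arguments are ground. $P$ satisfies $M$ iff for every non-basic $A_0$ satisfying $M$ and every non-basic $A$ and goal $G$ with $A_0\longmapsto^*_P(A,G)$, $A$ satisfies $M$. A clause is safe w.r.t. $M$ iff every variable of every disequation in its body is an input variable of its head or a local variable of that disequation in the clause; a program is safe iff all its clauses are. Satisfiability. A ground basic goal holds iff each of its atoms is $\mathit{true}$, $t=t$, or $t_1\neq t_2$ with $t_1,t_2$ distinct ground terms. For a set $V$ of variables, a conjunction $D$ of disequations is satisfiable w.r.t. $V$ iff there is a ground substitution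 $\sigma$ with domain $V$ such that every ground instance of $D\sigma$ holds. Guard. $grd(C)$ is $bd(C)$ if all atoms of $bd(C)$ are disequations, and otherwise the (possibly empty) conjunction of the disequations of $bd(C)$ to the left of the leftmost atom which is not a disequation. Mutual exclusion. Let $C_1: p(t_1,u_1)\leftarrow G_1$ and $C_2: p(t_2,u_2)\leftarrow G_2$ be renamed apart clauses, where $t_1,t_2$ are the tuples of input arguments of $p$ under $M$ and $u_1,u_2$ the remaining arguments. $C_1,C_2$ are mutually exclusive w.r.t. $M$ iff either $t_1,t_2$ are not unifiable, or they are unifiable via an mgu $\vartheta$ and $(grd(C_1),grd(C_2))\vartheta$ is not satisfiable w.r.t. $vars(t_1,t_2)$ (empty tuples are unifiable via the identity substitution). *)

theory Defs
  imports Main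
begin

datatype ('f, 'v) trm = Var 'v | Fn 'f "('f, 'v) trm list"

(* atoms. The basic atom true is the neutral element of ",", so it is
   represented by the empty goal and not as an atom. *)
datatype ('f, 'p, 'v) atm =
    Eq "('f, 'v) trm" "('f, 'v) trm"
  | Neq "('f, 'v) trm" "('f, 'v) trm"
  | Pred 'p "('f, 'v) trm list"

type_synonym ('f, 'p, 'v) goal = "('f, 'p, 'v) atm list"

(* clause  p(ts) <- body ; the head is non-basic by construction *)
datatype ('f, 'p, 'v) clause = Clause 'p "('f, 'v) trm list" "('f, 'p, 'v) goal"

type_synonym ('f, 'p, 'v) program = "('f, 'p, 'v) clause set"

fun hd_cl :: "('f, 'p, 'v) clause \<Rightarrow> ('f, 'p, 'v) atm" where
  "hd_cl (Clause p ts B) = Pred p ts"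

fun bd_cl :: "('f, 'p, 'v) clause \<Rightarrow> ('f, 'p, 'v) goal" where
  "bd_cl (Clause p ts B) = B"

fun nonbasic :: "('f, 'p, 'v) atm \<Rightarrow> bool" where
  "nonbasic (Pred p ts) = True"
| "nonbasic _ = False"

fun is_diseq :: "('f, 'p, 'v) atm \<Rightarrow> bool" where
  "is_diseq (Neq s t) = True"
| "is_diseq _ = False"

definition basic_goal :: "('f, 'p, 'v) goal \<Rightarrow> bool" where
  "basic_goal G \<longleftrightarrow> (\<forall>A \<in> set G. \<not> nonbasic A)"

definition unit_clause :: "('f, 'p, 'v) clause \<Rightarrow> bool" where
  "unit_clause C \<longleftrightarrow> basic_goal (bd_cl C)"

definition linear :: "('f, 'p, 'v) program \<Rightarrow> bool" where
  "linear P \<longleftrightarrow> (\<forall>C \<in> P. length (filter nonbasic (bd_cl C)) \<le> 1)"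

fun vars_trm :: "('f, 'v) trm \<Rightarrow> 'v set" where
  "vars_trm (Var x) = {x}"
| "vars_trm (Fn f ts) = (\<Union>t \<in> set ts. vars_trm t)"

definition vars_trms :: "('f, 'v) trm list \<Rightarrow> 'v set" where
  "vars_trms ts = (\<Union>t \<in> set ts. vars_trm t)"

fun vars_atm :: "('f, 'p, 'v) atm \<Rightarrow> 'v set" where
  "vars_atm (Eq s t) = vars_trm s \<union> vars_trm t"
| "vars_atm (Neq s t) = vars_trm s \<union> vars_trm t"
| "vars_atm (Pred p ts) = vars_trms ts"

definition vars_goal :: "('f, 'p, 'v) goal \<Rightarrow> 'v set" where
  "vars_goal G = (\<Union>A \<in> set G. vars_atm A)"

definition vars_cl :: "('f, 'p, 'v) clause \<Rightarrow> 'v set" where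
  "vars_cl C = vars_atm (hd_cl C) \<union> vars_goal (bd_cl C)"

definition ground :: "('f, 'v) trm \<Rightarrow> bool" where
  "ground t \<longleftrightarrow> vars_trm t = {}"

type_synonym ('f, 'v) subst = "'v \<Rightarrow> ('f, 'v) trm"

fun tsubst :: "('f, 'v) subst \<Rightarrow> ('f, 'v) trm \<Rightarrow> ('f, 'v) trm" where
  "tsubst \<sigma> (Var x) = \<sigma> x"
| "tsubst \<sigma> (Fn f ts) = Fn f (map (tsubst \<sigma>) ts)"

fun asubst :: "('f, 'v) subst \<Rightarrow> ('f, 'p, 'v) atm \<Rightarrow> ('f, 'p, 'v) atm" where
  "asubst \<sigma> (Eq s t) = Eq (tsubst \<sigma> s) (tsubst \<sigma> t)"
| "asubst \<sigma> (Neq s t) = Neq (tsubst \<sigma> s) (tsubst \<sigma> t)"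
| "asubst \<sigma> (Pred p ts) = Pred p (map (tsubst \<sigma>) ts)"

definition gsubst :: "('f, 'v) subst \<Rightarrow> ('f, 'p, 'v) goal \<Rightarrow> ('f, 'p, 'v) goal" where
  "gsubst \<sigma> G = map (asubst \<sigma>) G"

fun csubst :: "('f, 'v) subst \<Rightarrow> ('f, 'p, 'v) clause \<Rightarrow> ('f, 'p, 'v) clause" where
  "csubst \<sigma> (Clause p ts B) = Clause p (map (tsubst \<sigma>) ts) (gsubst \<sigma> B)"

definition renaming :: "('f, 'v) subst \<Rightarrow> bool" where
  "renaming \<rho> \<longleftrightarrow> (\<exists>\<pi>. bij \<pi> \<and> (\<forall>x. \<rho> x = Var (\<pi> x)))"

definition subst_dom :: "('f, 'v) subst \<Rightarrow> 'v set" where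
  "subst_dom \<sigma> = {x. \<sigma> x \<noteq> Var x}"

definition subst_vars :: "('f, 'v) subst \<Rightarrow> 'v set" where
  "subst_vars \<sigma> = subst_dom \<sigma> \<union> (\<Union>x \<in> subst_dom \<sigma>. vars_trm (\<sigma> x))"

definition unifier :: "('f, 'v) subst \<Rightarrow> ('f, 'v) trm list \<Rightarrow> ('f, 'v) trm list \<Rightarrow> bool" where
  "unifier \<sigma> ss ts \<longleftrightarrow> map (tsubst \<sigma>) ss = map (tsubst \<sigma>) ts"

definition unifiable :: "('f, 'v) trm list \<Rightarrow> ('f, 'v) trm list \<Rightarrow> bool" where
  "unifiable ss ts \<longleftrightarrow> (\<exists>\<sigma>. unifier \<sigma> ss ts)"

definition is_mgu :: "('f, 'v) subst \<Rightarrow> ('f, 'v) trm list \<Rightarrow> ('f, 'v) trm list \<Rightarrow> bool" where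
  "is_mgu \<theta> ss ts \<longleftrightarrow> unifier \<theta> ss ts \<and>
     (\<forall>\<sigma>. unifier \<sigma> ss ts \<longrightarrow> (\<exists>\<delta>. \<forall>x. \<sigma> x = tsubst \<delta> (\<theta> x)))"

(* relevant and idempotent mgu (the only mgu's used) *)
definition rmgu :: "('f, 'v) subst \<Rightarrow> ('f, 'v) trm list \<Rightarrow> ('f, 'v) trm list \<Rightarrow> bool" where
  "rmgu \<theta> ss ts \<longleftrightarrow> is_mgu \<theta> ss ts \<and>
     (\<forall>x. tsubst \<theta> (\<theta> x) = \<theta> x) \<and>
     subst_vars \<theta> \<subseteq> vars_trms ss \<union> vars_trms ts"

inductive basic_step :: "('f, 'p, 'v) goal \<Rightarrow> ('f, 'p, 'v) goal \<Rightarrow> bool" where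
  eq:  "rmgu \<theta> [t1] [t2] \<Longrightarrow> basic_step (Eq t1 t2 # G) (gsubst \<theta> G)"
| neq: "\<not> unifiable [t1] [t2] \<Longrightarrow> basic_step (Neq t1 t2 # G) G"

inductive step_using ::
  "('f, 'p, 'v) program \<Rightarrow> ('f, 'p, 'v) clause \<Rightarrow> ('f, 'p, 'v) goal \<Rightarrow> ('f, 'p, 'v) goal \<Rightarrow> bool"
  for P where
  "\<lbrakk> C \<in> P; renaming \<rho>; csubst \<rho> C = Clause p us B;
     vars_cl (csubst \<rho> C) \<inter> vars_goal (Pred p ts # G) = {};
     rmgu \<theta> ts us \<rbrakk>
   \<Longrightarrow> step_using P C (Pred p ts # G) (gsubst \<theta> (B @ G))"

definition step :: "('f, 'p, 'v) program \<Rightarrow> ('f, 'p, 'v) goal \<Rightarrow> ('f, 'p, 'v) goal \<Rightarrow> bool" where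
  "step P G G' \<longleftrightarrow> basic_step G G' \<or> (\<exists>C. step_using P C G G')"

definition deriv_cl ::
  "('f, 'p, 'v) program \<Rightarrow> ('f, 'p, 'v) clause \<Rightarrow> ('f, 'p, 'v) goal \<Rightarrow> ('f, 'p, 'v) goal \<Rightarrow> bool" where
  "deriv_cl P C G G' \<longleftrightarrow>
     (\<exists>G1. step_using P C G G1 \<and> basic_step\<^sup>*\<^sup>* G1 G' \<and>
           (G' = [] \<or> nonbasic (hd G')))"

definition derivs :: "('f, 'p, 'v) program \<Rightarrow> ('f, 'p, 'v) goal \<Rightarrow> ('f, 'p, 'v) goal \<Rightarrow> bool" where
  "derivs P = (\<lambda>G G'. \<exists>C \<in> P. deriv_cl P C G G')\<^sup>*\<^sup>*"

definition semidet_for :: "('f, 'p, 'v) program \<Rightarrow> ('f, 'p, 'v) atm \<Rightarrow> bool" where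
  "semidet_for P A \<longleftrightarrow>
     (\<forall>G. derivs P [A] G \<longrightarrow>
        (\<forall>C1 \<in> P. \<forall>C2 \<in> P.
           (\<exists>G'. deriv_cl P C1 G G' \<and> G' \<noteq> []) \<longrightarrow>
           (\<exists>G'. deriv_cl P C2 G G' \<and> G' \<noteq> []) \<longrightarrow> C1 = C2))"

(* a mode: partial map from predicate symbols to argument modes; True = '+', False = '?' *)
type_synonym 'p mode = "'p \<Rightarrow> bool list option"

fun atm_satisfies :: "'p mode \<Rightarrow> ('f, 'p, 'v) atm \<Rightarrow> bool" where
  "atm_satisfies M (Pred p ts) =
     (\<exists>ms. M p = Some ms \<and> length ms = length ts \<and>
           (\<forall>i < length ts. ms ! i \<longrightarrow> ground (ts ! i)))"
| "atm_satisfies M _ = False"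

definition semidet :: "('f, 'p, 'v) program \<Rightarrow> 'p mode \<Rightarrow> bool" where
  "semidet P M \<longleftrightarrow> (\<forall>A. nonbasic A \<longrightarrow> atm_satisfies M A \<longrightarrow> semidet_for P A)"

definition nb_atoms_cl :: "('f, 'p, 'v) clause \<Rightarrow> ('f, 'p, 'v) atm set" where
  "nb_atoms_cl C = insert (hd_cl C) {A \<in> set (bd_cl C). nonbasic A}"

definition mode_for :: "'p mode \<Rightarrow> ('f, 'p, 'v) program \<Rightarrow> bool" where
  "mode_for M P \<longleftrightarrow>
     (\<forall>p. M p \<noteq> None \<longleftrightarrow> (\<exists>C \<in> P. \<exists>ts. Pred p ts \<in> nb_atoms_cl C)) \<and>
     (\<forall>C \<in> P. \<forall>p ts. Pred p ts \<in> nb_atoms_cl C \<longrightarrow>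
        (\<exists>ms. M p = Some ms \<and> length ms = length ts))"

definition prog_satisfies :: "('f, 'p, 'v) program \<Rightarrow> 'p mode \<Rightarrow> bool" where
  "prog_satisfies P M \<longleftrightarrow>
     (\<forall>A0 A G. nonbasic A0 \<longrightarrow> atm_satisfies M A0 \<longrightarrow> nonbasic A \<longrightarrow>
        (step P)\<^sup>*\<^sup>* [A0] (A # G) \<longrightarrow> atm_satisfies M A)"

fun input_args :: "'p mode \<Rightarrow> ('f, 'p, 'v) atm \<Rightarrow> ('f, 'v) trm list" where
  "input_args M (Pred p ts) =
     (case M p of None \<Rightarrow> [] | Some ms \<Rightarrow> map fst (filter snd (zip ts ms)))"
| "input_args M _ = []"

fun other_args :: "'p mode \<Rightarrow> ('f, 'p, 'v) atm \<Rightarrow> ('f, 'v) trm list" where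
  "other_args M (Pred p ts) =
     (case M p of None \<Rightarrow> ts | Some ms \<Rightarrow> map fst (filter (Not \<circ> snd) (zip ts ms)))"
| "other_args M _ = []"

definition input_vars :: "'p mode \<Rightarrow> ('f, 'p, 'v) atm \<Rightarrow> 'v set" where
  "input_vars M A = vars_trms (input_args M A)"

definition local_var_of :: "('f, 'p, 'v) clause \<Rightarrow> nat \<Rightarrow> 'v \<Rightarrow> bool" where
  "local_var_of C i X \<longleftrightarrow>
     X \<in> vars_atm (bd_cl C ! i) \<and> X \<notin> vars_atm (hd_cl C) \<and>
     (\<forall>j < length (bd_cl C). j \<noteq> i \<longrightarrow> X \<notin> vars_atm (bd_cl C ! j))"

definition safe_cl :: "'p mode \<Rightarrow> ('f, 'p, 'v) clause \<Rightarrow> bool" where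
  "safe_cl M C \<longleftrightarrow>
     (\<forall>i < length (bd_cl C). is_diseq (bd_cl C ! i) \<longrightarrow>
        (\<forall>X \<in> vars_atm (bd_cl C ! i). X \<in> input_vars M (hd_cl C) \<or> local_var_of C i X))"

definition safe :: "('f, 'p, 'v) program \<Rightarrow> 'p mode \<Rightarrow> bool" where
  "safe P M \<longleftrightarrow> (\<forall>C \<in> P. safe_cl M C)"

fun holds_atm :: "('f, 'p, 'v) atm \<Rightarrow> bool" where
  "holds_atm (Eq s t) = (s = t)"
| "holds_atm (Neq s t) = (s \<noteq> t)"
| "holds_atm (Pred p ts) = False"

definition holds :: "('f, 'p, 'v) goal \<Rightarrow> bool" where
  "holds G \<longleftrightarrow> (\<forall>A \<in> set G. holds_atm A)"

definition satisfiable_wrt :: "('f, 'p, 'v) goal \<Rightarrow> 'v set \<Rightarrow> bool" where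
  "satisfiable_wrt D V \<longleftrightarrow>
     (\<exists>\<sigma>. (\<forall>x \<in> V. ground (\<sigma> x)) \<and> (\<forall>x. x \<notin> V \<longrightarrow> \<sigma> x = Var x) \<and>
          (\<forall>\<tau>. (\<forall>x. ground (\<tau> x)) \<longrightarrow> holds (gsubst \<tau> (gsubst \<sigma> D))))"

definition grd :: "('f, 'p, 'v) clause \<Rightarrow> ('f, 'p, 'v) goal" where
  "grd C = (if (\<forall>A \<in> set (bd_cl C). is_diseq A) then bd_cl C
            else takeWhile is_diseq (bd_cl C))"

fun pred_of :: "('f, 'p, 'v) clause \<Rightarrow> 'p" where
  "pred_of (Clause p ts B) = p"

(* mutual exclusion of two renamed apart clauses of the same predicate *)
definition mut_excl_ra :: "'p mode \<Rightarrow> ('f, 'p, 'v) clause \<Rightarrow> ('f, 'p, 'v) clause \<Rightarrow> bool" where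
  "mut_excl_ra M C1 C2 \<longleftrightarrow>
     (let t1 = input_args M (hd_cl C1); t2 = input_args M (hd_cl C2) in
       \<not> unifiable t1 t2 \<or>
       (\<exists>\<theta>. rmgu \<theta> t1 t2 \<and>
            \<not> satisfiable_wrt (gsubst \<theta> (grd C1 @ grd C2)) (vars_trms t1 \<union> vars_trms t2)))"

definition mut_excl :: "'p mode \<Rightarrow> ('f, 'p, 'v) clause \<Rightarrow> ('f, 'p, 'v) clause \<Rightarrow> bool" where
  "mut_excl M C1 C2 \<longleftrightarrow>
     (\<forall>\<rho>1 \<rho>2. renaming \<rho>1 \<longrightarrow> renaming \<rho>2 \<longrightarrow>
        vars_cl (csubst \<rho>1 C1) \<inter> vars_cl (csubst \<rho>2 C2) = {} \<longrightarrow>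
        mut_excl_ra M (csubst \<rho>1 C1) (csubst \<rho>2 C2))"

end

theory Submission
  imports Defs "HOL-Combinatorics.Transposition"
begin

(*
  By linearity, every goal reached from a single atom contains at most one non-basic
  atom, so a derivation step with a unit clause can only lead to the empty goal. Two
  clauses C1, C2 that both lead to a non-empty goal are therefore non-unit clauses for
  the predicate of the selected atom, whose input arguments T are ground because P
  satisfies M.

  A step with a non-unit clause C that reaches the next non-basic atom has refuted each
  disequation of grd C by non-unifiability. By safety, the variables of these
  disequations are input variables of the head, which the step binds to ground terms,
  or local variables, which the relevant mgu does not touch. Hence there is a ground
  matcher of the input arguments of C onto T that refutes grd C. The matchers obtained
  for renamed apart copies of C1 and C2 combine to a unifier of their input arguments
  that satisfies both guards, contradicting mutual exclusion.
*)

lemma vars_tsubst: "vars_trm (tsubst \<sigma> t) = (\<Union>x \<in> vars_trm t. vars_trm (\<sigma> x))"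
  by (induction t) auto

lemma tsubst_tsubst: "tsubst \<sigma> (tsubst \<theta> t) = tsubst (\<lambda>x. tsubst \<sigma> (\<theta> x)) t"
  by (induction t) auto

lemma tsubst_cong: "(\<And>x. x \<in> vars_trm t \<Longrightarrow> \<sigma> x = \<sigma>' x) \<Longrightarrow> tsubst \<sigma> t = tsubst \<sigma>' t"
  by (induction t) auto

lemma tsubst_Var [simp]: "tsubst Var t = t"
  by (induction t) (auto simp: map_idI)

lemma ground_tsubst: "ground (tsubst \<sigma> t) \<longleftrightarrow> (\<forall>x \<in> vars_trm t. ground (\<sigma> x))"
  by (auto simp: ground_def vars_tsubst)

lemma tsubst_ground: "ground t \<Longrightarrow> tsubst \<sigma> t = t"
  by (metis empty_iff ground_def tsubst_Var tsubst_cong)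

lemma asubst_asubst: "asubst \<sigma> (asubst \<theta> A) = asubst (\<lambda>x. tsubst \<sigma> (\<theta> x)) A"
  by (cases A) (auto simp: tsubst_tsubst)

lemma nonbasic_asubst [simp]: "nonbasic (asubst \<sigma> A) = nonbasic A"
  by (cases A) auto

lemma is_diseq_asubst [simp]: "is_diseq (asubst \<sigma> A) = is_diseq A"
  by (cases A) auto

lemma nonbasic_count_gsubst [simp]:
  "length (filter nonbasic (gsubst \<sigma> G)) = length (filter nonbasic G)"
  by (induction G) (auto simp: gsubst_def)

lemma finite_vars_trm [simp]: "finite (vars_trm t)"
  by (induction t) auto

lemma finite_vars_atm [simp]: "finite (vars_atm A)"
  by (cases A) (auto simp: vars_trms_def)

lemma finite_vars_cl: "finite (vars_cl C)"
  by (cases C) (auto simp: vars_cl_def vars_goal_def vars_trms_def)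

lemma vars_trms_map_tsubst: "vars_trms (map (tsubst \<sigma>) ts) = (\<Union>x \<in> vars_trms ts. vars_trm (\<sigma> x))"
  by (auto simp: vars_trms_def vars_tsubst)

lemma vars_atm_asubst: "vars_atm (asubst \<sigma> A) = (\<Union>x \<in> vars_atm A. vars_trm (\<sigma> x))"
  by (cases A) (auto simp: vars_trms_map_tsubst vars_tsubst)

lemma vars_cl_csubst: "vars_cl (csubst \<sigma> C) = (\<Union>x \<in> vars_cl C. vars_trm (\<sigma> x))"
  by (cases C) (auto simp: vars_cl_def vars_goal_def gsubst_def vars_atm_asubst vars_trms_map_tsubst)

lemma bd_cl_csubst: "bd_cl (csubst \<sigma> C) = gsubst \<sigma> (bd_cl C)"
  by (cases C) auto

lemma hd_cl_csubst: "hd_cl (csubst \<sigma> C) = asubst \<sigma> (hd_cl C)"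
  by (cases C) auto

lemma pred_of_csubst: "pred_of (csubst \<sigma> C) = pred_of C"
  by (cases C) auto

lemma takeWhile_is_diseq_map_asubst:
  "takeWhile is_diseq (map (asubst \<sigma>) B) = map (asubst \<sigma>) (takeWhile is_diseq B)"
  by (induction B) auto

lemma grd_csubst: "grd (csubst \<sigma> C) = gsubst \<sigma> (grd C)"
  by (cases C) (simp add: grd_def gsubst_def takeWhile_is_diseq_map_asubst)

lemma csubst_Var [simp]: "csubst Var C = C"
proof -
  have asubst_Var: "asubst Var = (id :: ('f, 'p, 'v) atm \<Rightarrow> _)"
  proof
    fix A :: "('f, 'p, 'v) atm"
    show "asubst Var A = id A"
      by (cases A) (auto simp: map_idI)
  qed
  show ?thesis
    by (cases C) (simp add: gsubst_def asubst_Var map_idI)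
qed

lemma ex_bij_image_disjoint:
  assumes "infinite (UNIV :: 'a set)" and "finite S" and "finite V"
  shows "\<exists>\<pi> :: 'a \<Rightarrow> 'a. bij \<pi> \<and> \<pi> ` S \<inter> V = {}"
  using \<open>finite S\<close>
proof (induction S rule: finite_induct)
  case empty
  show ?case
    using bij_id by blast
next
  case (insert x S)
  then obtain \<pi> where "bij \<pi>" and disjoint: "\<pi> ` S \<inter> V = {}"
    by blast
  obtain z where z: "z \<notin> V \<union> \<pi> ` S"
    using ex_new_if_finite[OF assms(1)] insert.hyps(1) assms(3) by (meson finite_UnI finite_imageI)
  have "(transpose (\<pi> x) z \<circ> \<pi>) y = \<pi> y" if "y \<in> S" for y
  proof -
    have "\<pi> y \<noteq> \<pi> x"
      using that \<open>x \<notin> S\<close> \<open>bij \<pi>\<close> by (auto dest: bij_is_inj inj_onD)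
    moreover have "\<pi> y \<noteq> z"
      using that z by blast
    ultimately show ?thesis
      by (simp add: transpose_apply_other)
  qed
  then have "(transpose (\<pi> x) z \<circ> \<pi>) ` S = \<pi> ` S"
    by (rule image_cong[OF refl])
  then have "(transpose (\<pi> x) z \<circ> \<pi>) ` insert x S \<inter> V = {}"
    using z disjoint by auto
  moreover have "bij (transpose (\<pi> x) z \<circ> \<pi>)"
    using \<open>bij \<pi>\<close> by (simp add: bij_comp)
  ultimately show ?case
    by blast
qed

lemma not_unifiable_tsubst:
  "\<not> unifiable [s] [t] \<Longrightarrow> \<not> unifiable [tsubst \<sigma> s] [tsubst \<sigma> t]"
  by (auto simp: unifiable_def unifier_def tsubst_tsubst)

lemma renaming_left_inverse:
  assumes "renaming \<rho>"
  obtains \<rho>' where "\<And>t. tsubst \<rho>' (tsubst \<rho> t) = t"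
proof -
  obtain \<pi> where "bij \<pi>" and \<rho>: "\<And>x. \<rho> x = Var (\<pi> x)"
    using assms by (auto simp: renaming_def)
  then have "(\<lambda>x. tsubst (Var \<circ> inv \<pi>) (\<rho> x)) = Var"
    by (auto simp: bij_is_inj)
  then show thesis
    by (intro that[of "Var \<circ> inv \<pi>"]) (simp add: tsubst_tsubst)
qed

lemma not_unifiable_renaming:
  "renaming \<rho> \<Longrightarrow> \<not> unifiable [tsubst \<rho> s] [tsubst \<rho> t] \<Longrightarrow> \<not> unifiable [s] [t]"
  by (metis renaming_left_inverse not_unifiable_tsubst)

lemma rmgu_Var: "rmgu \<theta> ss ts \<Longrightarrow> x \<notin> vars_trms ss \<Longrightarrow> x \<notin> vars_trms ts \<Longrightarrow> \<theta> x = Var x"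
  by (auto simp: rmgu_def subst_vars_def subst_dom_def)

lemma unifier_tsubst_rmgu:
  assumes "rmgu \<theta> ss ts" and "unifier \<sigma> ss ts"
  shows "tsubst \<sigma> (tsubst \<theta> t) = tsubst \<sigma> t"
proof -
  obtain \<delta> where \<delta>: "\<sigma> = (\<lambda>x. tsubst \<delta> (\<theta> x))"
    using assms unfolding rmgu_def is_mgu_def by blast
  have idempotent: "tsubst \<theta> (\<theta> x) = \<theta> x" for x
    using assms(1) by (simp add: rmgu_def)
  have "tsubst \<sigma> (\<theta> x) = \<sigma> x" for x
    using idempotent[of x] by (simp add: \<delta> tsubst_tsubst[symmetric])
  then show ?thesis
    by (simp add: tsubst_tsubst)
qed

lemma satisfiable_wrtI:
  fixes D :: "('f, 'p, 'v) goal"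
  assumes "\<And>x. x \<in> V \<Longrightarrow> ground (\<sigma> x)" and "\<And>x. x \<notin> V \<Longrightarrow> \<sigma> x = Var x"
    and "\<And>A. A \<in> set D \<Longrightarrow> \<exists>s t. A = Neq s t \<and> \<not> unifiable [tsubst \<sigma> s] [tsubst \<sigma> t]"
  shows "satisfiable_wrt D V"
  unfolding satisfiable_wrt_def
proof (intro exI conjI allI impI ballI)
  fix \<tau> :: "('f, 'v) subst"
  have "holds_atm (asubst \<tau> (asubst \<sigma> A))" if "A \<in> set D" for A
    using assms(3)[OF that] not_unifiable_tsubst[of _ _ \<tau>]
    by (auto simp: unifiable_def unifier_def)
  then show "holds (gsubst \<tau> (gsubst \<sigma> D))"
    by (auto simp: holds_def gsubst_def)
qed (use assms in auto)

lemma satisfiable_wrt_rmgu: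
  assumes "rmgu \<theta> ss ts" and "unifier \<sigma> ss ts"
    and "\<And>x. x \<in> V \<Longrightarrow> ground (\<sigma> x)" and "\<And>x. x \<notin> V \<Longrightarrow> \<sigma> x = Var x"
    and "\<And>A. A \<in> set D \<Longrightarrow> \<exists>s t. A = Neq s t \<and> \<not> unifiable [tsubst \<sigma> s] [tsubst \<sigma> t]"
  shows "satisfiable_wrt (gsubst \<theta> D) V"
proof (rule satisfiable_wrtI)
  fix A
  assume "A \<in> set (gsubst \<theta> D)"
  then obtain A0 where "A0 \<in> set D" and "A = asubst \<theta> A0"
    by (auto simp: gsubst_def)
  then obtain s t where "A = Neq (tsubst \<theta> s) (tsubst \<theta> t)"
    and "\<not> unifiable [tsubst \<sigma> s] [tsubst \<sigma> t]"
    using assms(5) by fastforce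
  then show "\<exists>s t. A = Neq s t \<and> \<not> unifiable [tsubst \<sigma> s] [tsubst \<sigma> t]"
    using unifier_tsubst_rmgu[OF assms(1,2)] by auto
qed (use assms(3,4) in auto)

lemma map_fst_filter_snd_zip:
  "map f (map fst (filter snd (zip xs ms))) = map fst (filter snd (zip (map f xs) ms))"
  by (induction xs arbitrary: ms) (auto split: list.splits simp: zip_Cons1)

lemma input_args_asubst: "input_args M (asubst \<sigma> A) = map (tsubst \<sigma>) (input_args M A)"
  by (cases A) (auto split: option.splits simp: map_fst_filter_snd_zip[symmetric])

lemma input_vars_subset: "input_vars M A \<subseteq> vars_atm A"
  by (cases A) (auto simp: input_vars_def vars_trms_def split: option.splits dest: set_zip_leftD)

lemma vars_input_args_subset_vars_cl:
  "t \<in> set (input_args M (hd_cl C)) \<Longrightarrow> vars_trm t \<subseteq> vars_cl C"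
  using input_vars_subset[of M "hd_cl C"] by (auto simp: input_vars_def vars_trms_def vars_cl_def)

lemma ground_input_args: "atm_satisfies M A \<Longrightarrow> t \<in> set (input_args M A) \<Longrightarrow> ground t"
  by (cases A) (auto simp: set_zip)

lemma grd_Neq: "A \<in> set (grd C) \<Longrightarrow> \<exists>a b. A = Neq a b"
  by (auto simp: grd_def split: if_splits dest: set_takeWhileD elim!: is_diseq.elims)

lemma grd_non_unit: "\<not> unit_clause C \<Longrightarrow> grd C = takeWhile is_diseq (bd_cl C)"
  by (auto simp: grd_def unit_clause_def basic_goal_def elim!: is_diseq.elims)

lemma set_grd_subset: "set (grd C) \<subseteq> set (bd_cl C)"
  by (auto simp: grd_def dest: set_takeWhileD)

lemma vars_grd_subset: "Neq a b \<in> set (grd C) \<Longrightarrow> vars_trm a \<union> vars_trm b \<subseteq> vars_cl C"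
  using set_grd_subset[of C] by (fastforce simp: vars_cl_def vars_goal_def)

lemma safe_cl_grd_vars:
  assumes "safe_cl M C" and "Neq a b \<in> set (grd C)" and "x \<in> vars_trm a \<union> vars_trm b"
  shows "x \<in> input_vars M (hd_cl C) \<or> x \<notin> vars_atm (hd_cl C)"
proof -
  obtain i where "i < length (bd_cl C)" and "bd_cl C ! i = Neq a b"
    using assms(2) set_grd_subset by (metis in_set_conv_nth subsetD)
  then show ?thesis
    using assms(1,3) by (fastforce simp: safe_cl_def local_var_of_def)
qed

lemma basic_steps_diseq_prefix_not_unifiable:
  assumes "basic_step\<^sup>*\<^sup>* G G'" and "G' = [] \<or> nonbasic (hd G')"
    and "A \<in> set (takeWhile is_diseq G)"
  shows "\<exists>s t. A = Neq s t \<and> \<not> unifiable [s] [t]"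
  using assms
proof (induction G)
  case Nil
  then show ?case
    by simp
next
  case (Cons B G)
  then obtain s t where B: "B = Neq s t"
    by (auto split: if_splits elim!: is_diseq.elims)
  then have "G' \<noteq> B # G"
    using Cons.prems(2) by auto
  then obtain G1 where "basic_step (B # G) G1" and "basic_step\<^sup>*\<^sup>* G1 G'"
    using Cons.prems(1) by (metis converse_rtranclpE)
  with B have "G1 = G" and "\<not> unifiable [s] [t]"
    by (auto elim: basic_step.cases)
  then show ?case
    using Cons B \<open>basic_step\<^sup>*\<^sup>* G1 G'\<close> by (auto split: if_splits)
qed

lemma basic_steps_refute_grd:
  assumes "basic_step\<^sup>*\<^sup>* (gsubst \<sigma> (bd_cl C) @ G) G'" and "G' = [] \<or> nonbasic (hd G')"
    and "\<not> unit_clause C" and "Neq a b \<in> set (grd C)"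
  shows "\<not> unifiable [tsubst \<sigma> a] [tsubst \<sigma> b]"
proof -
  have "Neq a b \<in> set (takeWhile is_diseq (bd_cl C))"
    using assms(3,4) by (simp add: grd_non_unit)
  then have "asubst \<sigma> (Neq a b) \<in> set (takeWhile is_diseq (gsubst \<sigma> (bd_cl C)))"
    unfolding gsubst_def takeWhile_is_diseq_map_asubst set_map by (rule imageI)
  then have "Neq (tsubst \<sigma> a) (tsubst \<sigma> b) \<in> set (takeWhile is_diseq (gsubst \<sigma> (bd_cl C) @ G))"
    by (auto simp: takeWhile_append split: if_splits dest: set_takeWhileD)
  then show ?thesis
    using basic_steps_diseq_prefix_not_unifiable[OF assms(1,2)] by blast
qed

lemma basic_steps_nonbasic_count:
  "basic_step\<^sup>*\<^sup>* G G' \<Longrightarrow> length (filter nonbasic G') \<le> length (filter nonbasic G)"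
proof (induction rule: rtranclp_induct)
  case (step G1 G2)
  then show ?case
    by (auto elim!: basic_step.cases)
qed simp

lemma step_using_nonbasic_count:
  "step_using P C G G' \<Longrightarrow>
   length (filter nonbasic G') + 1 = length (filter nonbasic (bd_cl C)) + length (filter nonbasic G)"
proof (induction rule: step_using.induct)
  case (1 C \<rho> p us B ts G \<theta>)
  then have "B = gsubst \<rho> (bd_cl C)"
    using bd_cl_csubst[of \<rho> C] by simp
  then show ?case
    by (simp add: gsubst_def[symmetric])
qed

lemma derivs_nonbasic_count:
  assumes "linear P" and "derivs P [A] G"
  shows "length (filter nonbasic G) \<le> 1"
  using assms(2) unfolding derivs_def
proof (induction rule: rtranclp_induct)
  case (step G G')
  then obtain C G1 where "C \<in> P" "step_using P C G G1" "basic_step\<^sup>*\<^sup>* G1 G'"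
    by (auto simp: deriv_cl_def)
  have "length (filter nonbasic (bd_cl C)) \<le> 1"
    using assms(1) \<open>C \<in> P\<close> by (simp add: linear_def)
  then show ?case
    using step.IH step_using_nonbasic_count[OF \<open>step_using P C G G1\<close>]
      basic_steps_nonbasic_count[OF \<open>basic_step\<^sup>*\<^sup>* G1 G'\<close>]
    by linarith
qed simp

lemma deriv_cl_unit_clause:
  assumes "length (filter nonbasic G) \<le> 1" and "unit_clause C" and "deriv_cl P C G G'"
  shows "G' = []"
proof -
  obtain G1 where "step_using P C G G1" "basic_step\<^sup>*\<^sup>* G1 G'" "G' = [] \<or> nonbasic (hd G')"
    using assms(3) by (auto simp: deriv_cl_def)
  moreover have "length (filter nonbasic (bd_cl C)) = 0"
    using assms(2) by (simp add: unit_clause_def basic_goal_def filter_empty_conv)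
  ultimately have "length (filter nonbasic G') = 0"
    using assms(1) step_using_nonbasic_count[of P C G G1] basic_steps_nonbasic_count[of G1 G']
    by linarith
  then show ?thesis
    using \<open>G' = [] \<or> nonbasic (hd G')\<close> by (cases G') auto
qed

lemma derivs_steps: "derivs P G G' \<Longrightarrow> (step P)\<^sup>*\<^sup>* G G'"
  unfolding derivs_def
proof (induction rule: rtranclp_induct)
  case (step G1 G2)
  then obtain C G3 where "step_using P C G1 G3" and "basic_step\<^sup>*\<^sup>* G3 G2"
    by (auto simp: deriv_cl_def)
  then have "(step P)\<^sup>*\<^sup>* G1 G2"
    by (metis converse_rtranclp_into_rtranclp mono_rtranclp step_def)
  then show ?case
    using step.IH by simp
qed simp

lemma deriv_cl_selected_atom:
  assumes "deriv_cl P C G G'"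
  shows "\<exists>ts G0. G = Pred (pred_of C) ts # G0"
proof -
  obtain G1 where "step_using P C G G1"
    using assms by (auto simp: deriv_cl_def)
  then show ?thesis
    by cases (metis pred_of.simps pred_of_csubst)
qed

lemma unifier_input_args:
  assumes "atm_satisfies M (Pred p ts)" and "unifier \<theta> ts us"
  shows "map (tsubst \<theta>) (input_args M (Pred p us)) = input_args M (Pred p ts)"
proof -
  have "map (tsubst \<theta>) (input_args M (Pred p us)) = input_args M (Pred p (map (tsubst \<theta>) us))"
    using input_args_asubst[of M \<theta> "Pred p us"] by simp
  also have "\<dots> = map (tsubst \<theta>) (input_args M (Pred p ts))"
    using assms(2) input_args_asubst[of M \<theta> "Pred p ts"] by (simp add: unifier_def)
  also have "\<dots> = input_args M (Pred p ts)"
    by (intro map_idI tsubst_ground ground_input_args[OF assms(1)])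
  finally show ?thesis .
qed

text \<open>Refutation by non-unifiability, rather than by distinctness of ground instances, is
  what a derivation step checks for a disequation; it also makes every ground instance of the
  refuted disequation hold, and together with the identity outside the input variables this is
  what satisfiable_wrt asks of a witness.\<close>

definition grd_matcher ::
  "'p mode \<Rightarrow> ('f, 'p, 'v) clause \<Rightarrow> ('f, 'v) trm list \<Rightarrow> ('f, 'v) subst \<Rightarrow> bool" where
  "grd_matcher M C T \<mu> \<longleftrightarrow>
     (\<forall>x \<in> input_vars M (hd_cl C). ground (\<mu> x)) \<and>
     (\<forall>x. x \<notin> input_vars M (hd_cl C) \<longrightarrow> \<mu> x = Var x) \<and>
     map (tsubst \<mu>) (input_args M (hd_cl C)) = T \<and>
     (\<forall>a b. Neq a b \<in> set (grd C) \<longrightarrow> \<not> unifiable [tsubst \<mu> a] [tsubst \<mu> b])"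

lemma grd_matcher_restrict:
  assumes "renaming \<rho>" and ground_T: "\<forall>t \<in> set T. ground t"
    and match: "map (tsubst \<nu>) (input_args M (hd_cl C)) = T"
    and refuted: "\<And>a b. Neq a b \<in> set (grd C) \<Longrightarrow> \<not> unifiable [tsubst \<nu> a] [tsubst \<nu> b]"
    and renames: "\<And>a b x. Neq a b \<in> set (grd C) \<Longrightarrow> x \<in> vars_trm a \<union> vars_trm b \<Longrightarrow>
      x \<notin> input_vars M (hd_cl C) \<Longrightarrow> \<nu> x = \<rho> x"
  shows "grd_matcher M C T (\<lambda>x. if x \<in> input_vars M (hd_cl C) then \<nu> x else Var x)"
    (is "grd_matcher M C T ?\<mu>")
proof -
  define V where "V = input_vars M (hd_cl C)"
  have ground: "ground (\<nu> x)" if "x \<in> V" for x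
  proof -
    obtain t where t: "t \<in> set (input_args M (hd_cl C))" "x \<in> vars_trm t"
      using \<open>x \<in> V\<close> by (auto simp: V_def input_vars_def vars_trms_def)
    then have "ground (tsubst \<nu> t)"
      using match ground_T by auto
    then show ?thesis
      using t(2) by (simp add: ground_tsubst)
  qed
  have "map (tsubst ?\<mu>) (input_args M (hd_cl C)) = T"
    unfolding match[symmetric] by (auto intro!: tsubst_cong simp: input_vars_def vars_trms_def)
  moreover have "\<not> unifiable [tsubst ?\<mu> a] [tsubst ?\<mu> b]" if grd: "Neq a b \<in> set (grd C)" for a b
  proof -
    have "tsubst \<nu> t = tsubst \<rho> (tsubst ?\<mu> t)" if "t \<in> {a, b}" for t
      unfolding tsubst_tsubst
    proof (rule tsubst_cong)
      fix x
      assume "x \<in> vars_trm t"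
      then show "\<nu> x = tsubst \<rho> (?\<mu> x)"
        using that ground renames[OF grd] by (auto simp: tsubst_ground V_def)
    qed
    then show ?thesis
      using refuted[OF grd] not_unifiable_renaming[OF \<open>renaming \<rho>\<close>] by simp
  qed
  ultimately show ?thesis
    using ground by (simp add: grd_matcher_def flip: V_def)
qed

lemma deriv_cl_grd_matcher:
  assumes deriv: "deriv_cl P C (Pred p ts # G) G'" and "safe_cl M C"
    and sat: "atm_satisfies M (Pred p ts)" and "\<not> unit_clause C"
  shows "\<exists>\<mu>. grd_matcher M C (input_args M (Pred p ts)) \<mu>"
proof -
  obtain G1 where "step_using P C (Pred p ts # G) G1" and steps: "basic_step\<^sup>*\<^sup>* G1 G'"
    and final: "G' = [] \<or> nonbasic (hd G')"
    using deriv by (auto simp: deriv_cl_def)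
  then obtain \<rho> us B \<theta> where "renaming \<rho>" and renamed: "csubst \<rho> C = Clause p us B"
    and apart: "vars_cl (csubst \<rho> C) \<inter> vars_goal (Pred p ts # G) = {}"
    and mgu: "rmgu \<theta> ts us" and G1: "G1 = gsubst \<theta> (B @ G)"
    by cases auto
  obtain \<pi> where \<rho>: "\<And>x. \<rho> x = Var (\<pi> x)" and "inj \<pi>"
    using \<open>renaming \<rho>\<close> by (auto simp: renaming_def bij_is_inj)
  define \<theta>\<rho> where "\<theta>\<rho> = (\<lambda>x. tsubst \<theta> (\<rho> x))"
  have hd_renamed: "Pred p us = asubst \<rho> (hd_cl C)"
    using renamed hd_cl_csubst by (metis hd_cl.simps)
  have "map (tsubst \<theta>\<rho>) (input_args M (hd_cl C)) = map (tsubst \<theta>) (input_args M (Pred p us))"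
    unfolding hd_renamed input_args_asubst by (simp add: \<theta>\<rho>_def tsubst_tsubst)
  also have "\<dots> = input_args M (Pred p ts)"
    using mgu unfolding rmgu_def is_mgu_def by (blast intro: unifier_input_args[OF sat])
  finally have match: "map (tsubst \<theta>\<rho>) (input_args M (hd_cl C)) = input_args M (Pred p ts)" .
  have "G1 = gsubst \<theta>\<rho> (bd_cl C) @ gsubst \<theta> G"
    using renamed bd_cl_csubst[of \<rho> C] by (simp add: G1 gsubst_def asubst_asubst \<theta>\<rho>_def)
  then have refuted: "\<not> unifiable [tsubst \<theta>\<rho> a] [tsubst \<theta>\<rho> b]" if "Neq a b \<in> set (grd C)" for a b
    using basic_steps_refute_grd steps final \<open>\<not> unit_clause C\<close> that by metis
  \<comment> \<open>By safety, a guard variable outside the input arguments is local to the body, so its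
    renamed copy occurs neither in the selected atom nor in the renamed head, and the relevant
    mgu does not bind it.\<close>
  have "\<theta>\<rho> x = \<rho> x" if grd: "Neq a b \<in> set (grd C)" and x: "x \<in> vars_trm a \<union> vars_trm b"
    and "x \<notin> input_vars M (hd_cl C)" for a b x
  proof -
    have "x \<notin> vars_atm (hd_cl C)"
      using safe_cl_grd_vars[OF \<open>safe_cl M C\<close> grd x] that(3) by blast
    moreover have "vars_trms us = \<pi> ` vars_atm (hd_cl C)"
      using arg_cong[OF hd_renamed, of vars_atm] by (auto simp: vars_atm_asubst \<rho>)
    ultimately have "\<pi> x \<notin> vars_trms us"
      using \<open>inj \<pi>\<close> by (auto simp: inj_eq)
    moreover have "\<pi> x \<notin> vars_trms ts"
      using apart vars_grd_subset[OF grd] x by (auto simp: vars_cl_csubst \<rho> vars_goal_def)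
    ultimately show ?thesis
      using rmgu_Var[OF mgu] by (simp add: \<theta>\<rho>_def \<rho>)
  qed
  then show ?thesis
    using grd_matcher_restrict[OF \<open>renaming \<rho>\<close> _ match refuted] ground_input_args[OF sat] by blast
qed

lemma tsubst_rename_conjugate:
  assumes "bij \<pi>"
  shows "tsubst (\<lambda>x. tsubst (Var \<circ> \<pi>) (\<mu> (inv \<pi> x))) (tsubst (Var \<circ> \<pi>) t) =
    tsubst (Var \<circ> \<pi>) (tsubst \<mu> t)"
  using assms by (simp add: tsubst_tsubst bij_is_inj)

lemma grd_matcher_rename:
  fixes C :: "('f, 'p, 'v) clause" and \<pi> :: "'v \<Rightarrow> 'v"
  assumes "bij \<pi>" and matcher: "grd_matcher M C T \<mu>"
  shows "grd_matcher M (csubst (Var \<circ> \<pi>) C) T (\<lambda>x. tsubst (Var \<circ> \<pi>) (\<mu> (inv \<pi> x)))"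
    (is "grd_matcher M ?C T ?\<mu>")
proof -
  let ?\<rho> = "Var \<circ> \<pi> :: ('f, 'v) subst"
  define V where "V = input_vars M (hd_cl C)"
  have inv: "inv \<pi> (\<pi> x) = x" "\<pi> (inv \<pi> x) = x" for x
    using \<open>bij \<pi>\<close> by (simp_all add: bij_is_inj bij_is_surj surj_f_inv_f)
  note commute = tsubst_rename_conjugate[OF \<open>bij \<pi>\<close>, of \<mu>]
  have input_args_renamed: "input_args M (hd_cl ?C) = map (tsubst ?\<rho>) (input_args M (hd_cl C))"
    by (simp add: hd_cl_csubst input_args_asubst)
  then have input_vars: "input_vars M (hd_cl ?C) = \<pi> ` V"
    by (auto simp: input_vars_def vars_trms_map_tsubst V_def)
  have ground: "\<forall>x \<in> V. ground (\<mu> x)" and Var: "\<forall>x. x \<notin> V \<longrightarrow> \<mu> x = Var x"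
    and match: "map (tsubst \<mu>) (input_args M (hd_cl C)) = T"
    and refuted: "\<forall>a b. Neq a b \<in> set (grd C) \<longrightarrow> \<not> unifiable [tsubst \<mu> a] [tsubst \<mu> b]"
    using matcher by (simp_all add: grd_matcher_def V_def)
  have "map (tsubst ?\<mu>) (input_args M (hd_cl ?C)) = map (tsubst ?\<rho>) T"
    by (simp add: input_args_renamed commute match[symmetric])
  also have "\<dots> = T"
    using ground match by (auto intro!: map_idI tsubst_ground
        simp: ground_tsubst V_def input_vars_def vars_trms_def)
  finally have "map (tsubst ?\<mu>) (input_args M (hd_cl ?C)) = T" .
  moreover have "\<not> unifiable [tsubst ?\<mu> a] [tsubst ?\<mu> b]" if grd: "Neq a b \<in> set (grd ?C)" for a b
  proof -
    obtain A where "A \<in> set (grd C)" and "Neq a b = asubst ?\<rho> A"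
      using grd unfolding grd_csubst gsubst_def set_map by blast
    moreover obtain a0 b0 where "A = Neq a0 b0"
      using grd_Neq[OF \<open>A \<in> set (grd C)\<close>] by blast
    ultimately show ?thesis
      using refuted not_unifiable_tsubst[of "tsubst \<mu> a0" "tsubst \<mu> b0" ?\<rho>] by (simp add: commute)
  qed
  moreover have "ground (?\<mu> x)" if "x \<in> \<pi> ` V" for x
    using that ground by (auto simp: inv(1) tsubst_ground)
  moreover have "?\<mu> x = Var x" if "x \<notin> \<pi> ` V" for x
  proof -
    have "inv \<pi> x \<notin> V"
      using that inv(2) by (metis image_eqI)
    then show ?thesis
      using Var inv(2) by simp
  qed
  ultimately show ?thesis
    by (simp add: grd_matcher_def input_vars)
qed

lemma grd_matcher_agree:
  assumes "grd_matcher M C T \<mu>" and agree: "\<And>x. x \<in> vars_cl C \<Longrightarrow> \<sigma> x = \<mu> x"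
  shows "map (tsubst \<sigma>) (input_args M (hd_cl C)) = T"
    and "Neq a b \<in> set (grd C) \<Longrightarrow> \<not> unifiable [tsubst \<sigma> a] [tsubst \<sigma> b]"
    and "x \<in> input_vars M (hd_cl C) \<Longrightarrow> ground (\<sigma> x)"
proof -
  have agree_trm: "tsubst \<sigma> t = tsubst \<mu> t" if "vars_trm t \<subseteq> vars_cl C" for t
    using that agree by (intro tsubst_cong) blast
  have "map (tsubst \<sigma>) (input_args M (hd_cl C)) = map (tsubst \<mu>) (input_args M (hd_cl C))"
    by (rule map_cong[OF refl], rule agree_trm, rule vars_input_args_subset_vars_cl)
  also have "\<dots> = T"
    using assms(1) by (simp add: grd_matcher_def)
  finally show "map (tsubst \<sigma>) (input_args M (hd_cl C)) = T" .
  show "Neq a b \<in> set (grd C) \<Longrightarrow> \<not> unifiable [tsubst \<sigma> a] [tsubst \<sigma> b]"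
    using assms(1) agree_trm vars_grd_subset[of a b C] by (simp add: grd_matcher_def)
  show "x \<in> input_vars M (hd_cl C) \<Longrightarrow> ground (\<sigma> x)"
    using assms(1) agree input_vars_subset[of M "hd_cl C"] by (auto simp: grd_matcher_def vars_cl_def)
qed

lemma not_mut_excl_ra_if_grd_matchers:
  fixes C1 C2 :: "('f, 'p, 'v) clause"
  assumes apart: "vars_cl C1 \<inter> vars_cl C2 = {}"
    and matcher1: "grd_matcher M C1 T \<mu>1" and matcher2: "grd_matcher M C2 T \<mu>2"
  shows "\<not> mut_excl_ra M C1 C2"
proof
  define t1 where "t1 = input_args M (hd_cl C1)"
  define t2 where "t2 = input_args M (hd_cl C2)"
  define \<sigma> where "\<sigma> x = (if x \<in> vars_cl C1 then \<mu>1 x else \<mu>2 x)" for x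
  have "\<sigma> x = \<mu>1 x" if "x \<in> vars_cl C1" for x
    using that by (simp add: \<sigma>_def)
  note \<sigma>1 = grd_matcher_agree[OF matcher1 this]
  have "\<sigma> x = \<mu>2 x" if "x \<in> vars_cl C2" for x
    using that apart by (auto simp: \<sigma>_def)
  note \<sigma>2 = grd_matcher_agree[OF matcher2 this]
  have unifier: "unifier \<sigma> t1 t2"
    using \<sigma>1(1) \<sigma>2(1) by (simp add: unifier_def t1_def t2_def)
  assume "mut_excl_ra M C1 C2"
  then obtain \<theta> where mgu: "rmgu \<theta> t1 t2"
    and unsat: "\<not> satisfiable_wrt (gsubst \<theta> (grd C1 @ grd C2)) (vars_trms t1 \<union> vars_trms t2)"
    using unifier by (auto simp: mut_excl_ra_def unifiable_def Let_def t1_def t2_def)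
  have "\<exists>a b. A = Neq a b \<and> \<not> unifiable [tsubst \<sigma> a] [tsubst \<sigma> b]"
    if "A \<in> set (grd C1 @ grd C2)" for A
    using that grd_Neq \<sigma>1(2) \<sigma>2(2) by fastforce
  moreover have "ground (\<sigma> x)" if "x \<in> vars_trms t1 \<union> vars_trms t2" for x
    using that \<sigma>1(3) \<sigma>2(3) by (auto simp: t1_def t2_def input_vars_def)
  moreover have "\<sigma> x = Var x" if "x \<notin> vars_trms t1 \<union> vars_trms t2" for x
    using that matcher1 matcher2 by (auto simp: grd_matcher_def \<sigma>_def t1_def t2_def input_vars_def)
  ultimately have "satisfiable_wrt (gsubst \<theta> (grd C1 @ grd C2)) (vars_trms t1 \<union> vars_trms t2)"
    by (intro satisfiable_wrt_rmgu[OF mgu unifier])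
  then show False
    using unsat by blast
qed

lemma not_mut_excl_if_grd_matchers:
  fixes C1 C2 :: "('f, 'p, 'v) clause"
  assumes "infinite (UNIV :: 'v set)"
    and "grd_matcher M C1 T \<mu>1" and "grd_matcher M C2 T \<mu>2"
  shows "\<not> mut_excl M C1 C2"
proof
  obtain \<pi> where "bij \<pi>" and apart: "\<pi> ` vars_cl C2 \<inter> vars_cl C1 = {}"
    using ex_bij_image_disjoint[OF assms(1) finite_vars_cl finite_vars_cl] by blast
  have "renaming (Var :: ('f, 'v) subst)" and "renaming (Var \<circ> \<pi> :: ('f, 'v) subst)"
    using \<open>bij \<pi>\<close> bij_id by (auto simp: renaming_def)
  moreover have "vars_cl (csubst Var C1) \<inter> vars_cl (csubst (Var \<circ> \<pi>) C2) = {}"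
    using apart by (auto simp: vars_cl_csubst)
  moreover assume "mut_excl M C1 C2"
  ultimately have "mut_excl_ra M C1 (csubst (Var \<circ> \<pi>) C2)"
    unfolding mut_excl_def by (metis csubst_Var)
  moreover have "\<not> mut_excl_ra M C1 (csubst (Var \<circ> \<pi>) C2)"
    using apart grd_matcher_rename[OF \<open>bij \<pi>\<close> assms(3)] assms(2)
    by (intro not_mut_excl_ra_if_grd_matchers) (auto simp: vars_cl_csubst)
  ultimately show False
    by blast
qed

theorem proposition2:
  fixes P :: "('f, 'p, 'v) program" and M :: "'p mode"
  assumes "infinite (UNIV :: 'f set)"
    and "infinite (UNIV :: 'v set)"
    and "mode_for M P"
    and "linear P"
    and "safe P M"
    and "prog_satisfies P M"
    and "\<forall>C1 \<in> P. \<forall>C2 \<in> P. C1 \<noteq> C2 \<longrightarrow> \<not> unit_clause C1 \<longrightarrow> \<not> unit_clause C2 \<longrightarrow>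
           pred_of C1 = pred_of C2 \<longrightarrow> mut_excl M C1 C2"
  shows "semidet P M"
  unfolding semidet_def semidet_for_def
proof (intro allI impI ballI)
  fix A G C1 C2
  assume "nonbasic A" and "atm_satisfies M A" and "derivs P [A] G" and "C1 \<in> P" and "C2 \<in> P"
    and "\<exists>G'. deriv_cl P C1 G G' \<and> G' \<noteq> []" and "\<exists>G'. deriv_cl P C2 G G' \<and> G' \<noteq> []"
  then obtain G1 G2 where deriv1: "deriv_cl P C1 G G1" "G1 \<noteq> []"
    and deriv2: "deriv_cl P C2 G G2" "G2 \<noteq> []"
    by blast
  have "length (filter nonbasic G) \<le> 1"
    using derivs_nonbasic_count \<open>linear P\<close> \<open>derivs P [A] G\<close> by blast
  then have non_unit: "\<not> unit_clause C1" "\<not> unit_clause C2"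
    using deriv_cl_unit_clause deriv1 deriv2 by blast+
  obtain ts G0 where G: "G = Pred (pred_of C1) ts # G0"
    using deriv_cl_selected_atom[OF deriv1(1)] by blast
  then have same_pred: "pred_of C1 = pred_of C2"
    using deriv_cl_selected_atom[OF deriv2(1)] by auto
  have "(step P)\<^sup>*\<^sup>* [A] (Pred (pred_of C1) ts # G0)"
    using derivs_steps \<open>derivs P [A] G\<close> G by blast
  then have sat: "atm_satisfies M (Pred (pred_of C1) ts)"
    using \<open>prog_satisfies P M\<close> \<open>nonbasic A\<close> \<open>atm_satisfies M A\<close>
    unfolding prog_satisfies_def by (meson nonbasic.simps(1))
  obtain \<mu>1 \<mu>2 where "grd_matcher M C1 (input_args M (Pred (pred_of C1) ts)) \<mu>1"
    and "grd_matcher M C2 (input_args M (Pred (pred_of C1) ts)) \<mu>2"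
    using deriv_cl_grd_matcher deriv1(1) deriv2(1) sat non_unit \<open>safe P M\<close> \<open>C1 \<in> P\<close> \<open>C2 \<in> P\<close>
    unfolding G safe_def by metis
  then have "\<not> mut_excl M C1 C2"
    using not_mut_excl_if_grd_matchers \<open>infinite (UNIV :: 'v set)\<close> by blast
  then show "C1 = C2"
    using assms(7) \<open>C1 \<in> P\<close> \<open>C2 \<in> P\<close> non_unit same_pred by blast
qed

end
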